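(* Let $G=(X,\Sigma,\longrightarrow,X_0)$ and $R=(Z,\Sigma,\longrightarrow,Z_0)$ be automata. (1) $\mathit{SPR}(G,R)\neq\emptyset$ iff there exists $W_0\in E^{\uparrow}_{(G,R)}$ such that $\forall x_0\in X_0\,\exists z_0\in Z_0\,((x_0,z_0)\in W_0)$. (2) If $\mathit{SPR}(G,R)\neq\emptyset$, then $E^{\uparrow}_{(G,R)}=\bigcup_{W\in E^{\uparrow}_{(G,R)}}\wp(W)$.
   Context: An automaton is a 4-tuple $A=(Q,\Sigma,\longrightarrow,Q_0)$ with state set $Q$, finite event set $\Sigma$, ${\longrightarrow}\subseteq Q\times\Sigma\times Q$ and $\emptyset\neq Q_0\subseteq Q$. Write $q\xrightarrow{\sigma}q'$ for $(q,\sigma,q')\in{\longrightarrow}$, $q\xrightarrow{\sigma}$ if some such $q'$ exists; extend to strings. A state is reachable if reached from an initial state by some string. Events are partitioned into uncontrollable $\Sigma_{uc}$ and controllable $\Sigma_c$; $\Sigma_r\subseteq\Sigma$ is a fixed set of required events. For a supervisor $S=(Y,\Sigma,\longrightarrow,Y_0)$, $S\|G=(Y\times X,\Sigma,\longrightarrow,Y_0\times X_0)$ with $(y,x)\xrightarrow{\sigma}(y',x')$ iff $y\xrightarrow{\sigma}y'$ and $x\xrightarrow{\sigma}x'$; $S$ is $\Sigma_{uc}$-admissible w.r.t. $G$ if for every reachable $(y,x)$ of $S\|G$ and $\sigma\in\Sigma_{uc}$, $x\xrightarrow{\sigma}$ implies $(y,x)\xrightarrow{\sigma}$. For automata $A_1,A_2$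 (state sets $Q_1,Q_2$, initial sets $Q_{01},Q_{02}$), $\Phi\subseteq Q_1\times Q_2$ is a cc-simulation if (initial state) every $q_0\in Q_{01}$ has $p_0\in Q_{02}$ with $(q_0,p_0)\in\Phi$; (forward) for $(q,p)\in\Phi$, $\sigma\in\Sigma$, $q\xrightarrow{\sigma}q'$ there is $p'$ with $p\xrightarrow{\sigma}p'$, $(q',p')\in\Phi$; ($\Sigma_r$-backward) for $(q,p)\in\Phi$, $\sigma\in\Sigma_r$, $p\xrightarrow{\sigma}p'$ there is $q'$ with $q\xrightarrow{\sigma}q'$, $(q',p')\in\Phi$. $A_1\sqsubseteq_{cc}A_2$ means one exists. $\mathit{SPR}(G,R)$ is the set of $\Sigma_{uc}$-admissible supervisors $S$ with $S\|G\sqsubseteq_{cc}R$. For $W,W'\subseteq X\times Z$: $\mathit{match}_{G,R}(W,\sigma,W')$ iff for all $(x,z)\in W$ and $x\xrightarrow{\sigma}x'$ there is $z'$ with $z\xrightarrow{\sigma}z'$ and $(x',z')\in W'$. $F_{(G,R)}:\wp(\wp(X\times Z))\to\wp(\wp(X\times Z))$ is defined by: $W\in F_{(G,R)}(E)$ iff $W\in E$ and (1) for every $\sigma\in\Sigma_{uc}$ there is $W'\in E$ with $\mathit{match}_{G,R}(W,\sigma,W')$, and (2) for every $(x,z)\in W$, $\sigma\in\Sigma_r$, $z'$ with $z\xrightarrow{\sigma}z'$ there exist $x'\in X$, $W'\in E$ with $x\xrightarrow{\sigma}x'$, $(x',z')\in W'$ and $\mathit{match}_{G,R}(W,\sigma,W')$.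 $F_{(G,R)}$ is monotone w.r.t. $\subseteq$, and $E^{\uparrow}_{(G,R)}$ denotes its greatest fixpoint. *)

theory Defs
  imports Main
begin

text \<open>The state set Q is the whole type 'q; the event set Sigma is the
  whole (finite) type 'e.  Nonemptiness of the initial set is imposed separately.\<close>

record ('q, 'e) automaton =
  trans :: "('q \<times> 'e \<times> 'q) set"
  init :: "'q set"

inductive reachable :: "('q, 'e) automaton \<Rightarrow> 'q \<Rightarrow> bool" for A where
  init_reach: "q \<in> init A \<Longrightarrow> reachable A q"
| step_reach: "reachable A q \<Longrightarrow> (q, \<sigma>, q') \<in> trans A \<Longrightarrow> reachable A q'"

definition sync :: "('y, 'e) automaton \<Rightarrow> ('x, 'e) automaton \<Rightarrow> ('y \<times> 'x, 'e) automaton" where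
  "sync S G = \<lparr> trans = {((y, x), \<sigma>, (y', x')) | y x \<sigma> y' x'.
                          (y, \<sigma>, y') \<in> trans S \<and> (x, \<sigma>, x') \<in> trans G},
               init = init S \<times> init G \<rparr>"

definition admissible :: "'e set \<Rightarrow> ('y, 'e) automaton \<Rightarrow> ('x, 'e) automaton \<Rightarrow> bool" where
  "admissible Euc S G \<longleftrightarrow>
     (\<forall>y x. reachable (sync S G) (y, x) \<longrightarrow>
        (\<forall>\<sigma>\<in>Euc. (\<exists>x'. (x, \<sigma>, x') \<in> trans G) \<longrightarrow> (\<exists>p'. ((y, x), \<sigma>, p') \<in> trans (sync S G))))"

definition cc_simulation :: "'e set \<Rightarrow> ('q, 'e) automaton \<Rightarrow> ('p, 'e) automaton \<Rightarrow> ('q \<times> 'p) set \<Rightarrow> bool" where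
  "cc_simulation Er A1 A2 \<Phi> \<longleftrightarrow>
     (\<forall>q0\<in>init A1. \<exists>p0\<in>init A2. (q0, p0) \<in> \<Phi>) \<and>
     (\<forall>q p \<sigma> q'. (q, p) \<in> \<Phi> \<longrightarrow> (q, \<sigma>, q') \<in> trans A1 \<longrightarrow>
         (\<exists>p'. (p, \<sigma>, p') \<in> trans A2 \<and> (q', p') \<in> \<Phi>)) \<and>
     (\<forall>q p \<sigma> p'. (q, p) \<in> \<Phi> \<longrightarrow> \<sigma> \<in> Er \<longrightarrow> (p, \<sigma>, p') \<in> trans A2 \<longrightarrow>
         (\<exists>q'. (q, \<sigma>, q') \<in> trans A1 \<and> (q', p') \<in> \<Phi>))"

definition cc_le :: "'e set \<Rightarrow> ('q, 'e) automaton \<Rightarrow> ('p, 'e) automaton \<Rightarrow> bool" where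
  "cc_le Er A1 A2 \<longleftrightarrow> (\<exists>\<Phi>. cc_simulation Er A1 A2 \<Phi>)"

definition SPR :: "'e set \<Rightarrow> 'e set \<Rightarrow> ('x, 'e) automaton \<Rightarrow> ('z, 'e) automaton \<Rightarrow> ('y, 'e) automaton set" where
  "SPR Euc Er G R = {S. init S \<noteq> {} \<and> admissible Euc S G \<and> cc_le Er (sync S G) R}"

definition match :: "('x, 'e) automaton \<Rightarrow> ('z, 'e) automaton \<Rightarrow> ('x \<times> 'z) set \<Rightarrow> 'e \<Rightarrow> ('x \<times> 'z) set \<Rightarrow> bool" where
  "match G R W \<sigma> W' \<longleftrightarrow>
     (\<forall>x z x'. (x, z) \<in> W \<longrightarrow> (x, \<sigma>, x') \<in> trans G \<longrightarrow> (\<exists>z'. (z, \<sigma>, z') \<in> trans R \<and> (x', z') \<in> W'))"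

definition F_op :: "'e set \<Rightarrow> 'e set \<Rightarrow> ('x, 'e) automaton \<Rightarrow> ('z, 'e) automaton
                    \<Rightarrow> ('x \<times> 'z) set set \<Rightarrow> ('x \<times> 'z) set set" where
  "F_op Euc Er G R E = {W. W \<in> E \<and>
     (\<forall>\<sigma>\<in>Euc. \<exists>W'\<in>E. match G R W \<sigma> W') \<and>
     (\<forall>x z \<sigma> z'. (x, z) \<in> W \<longrightarrow> \<sigma> \<in> Er \<longrightarrow> (z, \<sigma>, z') \<in> trans R \<longrightarrow>
        (\<exists>x' W'. (x, \<sigma>, x') \<in> trans G \<and> W' \<in> E \<and> (x', z') \<in> W' \<and> match G R W \<sigma> W'))}"

definition E_up :: "'e set \<Rightarrow> 'e set \<Rightarrow> ('x, 'e) automaton \<Rightarrow> ('z, 'e) automaton \<Rightarrow> ('x \<times> 'z) set set" where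
  "E_up Euc Er G R = gfp (F_op Euc Er G R)"

end

theory Submission
  imports Defs
begin

text \<open>A supervisor S and a cc-simulation \<Phi> of S||G by R are turned into the family of
  slices W(y) = {(x, z). (y, x) reachable and ((y, x), z) \<in> \<Phi>}, one per supervisor state y;
  the forward and backward clauses of \<Phi> and admissibility of S make this family a
  post-fixpoint of F, hence it lies below the greatest fixpoint.  Conversely, any
  post-fixpoint E of F is itself a supervisor: its states are the sets W \<in> E, with a
  \<sigma>-transition from W to W' whenever match(W, \<sigma>, W'), and membership (x, z) \<in> W is the
  required cc-simulation.  Finally, match is antitone in its first argument, so the downward
  closure of a post-fixpoint is again one, and the greatest fixpoint is downward closed for
  all G and R.\<close>

lemma sync_trans_iff [simp]:
  "(((y, x), \<sigma>, (y', x')) \<in> trans (sync S G)) \<longleftrightarrow> (y, \<sigma>, y') \<in> trans S \<and> (x, \<sigma>, x') \<in> trans G"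
  unfolding sync_def by auto

lemma init_sync [simp]: "init (sync S G) = init S \<times> init G"
  unfolding sync_def by auto

lemma match_antimono: "match G R W \<sigma> W' \<Longrightarrow> V \<subseteq> W \<Longrightarrow> match G R V \<sigma> W'"
  unfolding match_def by blast

lemma F_opI:
  assumes "W \<in> E"
    and "\<And>\<sigma>. \<sigma> \<in> Euc \<Longrightarrow> \<exists>W'\<in>E. match G R W \<sigma> W'"
    and "\<And>x z \<sigma> z'. (x, z) \<in> W \<Longrightarrow> \<sigma> \<in> Er \<Longrightarrow> (z, \<sigma>, z') \<in> trans R \<Longrightarrow>
           \<exists>x' W'. (x, \<sigma>, x') \<in> trans G \<and> W' \<in> E \<and> (x', z') \<in> W' \<and> match G R W \<sigma> W'"
  shows "W \<in> F_op Euc Er G R E"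
  using assms unfolding F_op_def by blast

lemma F_op_subset: "F_op Euc Er G R E \<subseteq> E"
  unfolding F_op_def by blast

lemma F_op_uncontrollable:
  "W \<in> F_op Euc Er G R E \<Longrightarrow> \<sigma> \<in> Euc \<Longrightarrow> \<exists>W'\<in>E. match G R W \<sigma> W'"
  unfolding F_op_def by blast

lemma F_op_required:
  "W \<in> F_op Euc Er G R E \<Longrightarrow> (x, z) \<in> W \<Longrightarrow> \<sigma> \<in> Er \<Longrightarrow> (z, \<sigma>, z') \<in> trans R \<Longrightarrow>
   \<exists>x' W'. (x, \<sigma>, x') \<in> trans G \<and> W' \<in> E \<and> (x', z') \<in> W' \<and> match G R W \<sigma> W'"
  unfolding F_op_def by blast

lemma F_op_mono: "mono (F_op Euc Er G R)"
  unfolding mono_def F_op_def by blast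

lemma E_up_fixpoint: "F_op Euc Er G R (E_up Euc Er G R) = E_up Euc Er G R"
  unfolding E_up_def using gfp_fixpoint[OF F_op_mono] .

lemma E_up_coinduct: "E \<subseteq> F_op Euc Er G R E \<Longrightarrow> E \<subseteq> E_up Euc Er G R"
  unfolding E_up_def by (rule gfp_upperbound)

lemma F_op_Pow_closure:
  "(\<Union>W\<in>F_op Euc Er G R E. Pow W) \<subseteq> F_op Euc Er G R (\<Union>W\<in>E. Pow W)"
proof
  fix V
  assume "V \<in> (\<Union>W\<in>F_op Euc Er G R E. Pow W)"
  then obtain W where W: "W \<in> F_op Euc Er G R E" and "V \<subseteq> W" by blast
  have "E \<subseteq> (\<Union>W\<in>E. Pow W)" by blast
  show "V \<in> F_op Euc Er G R (\<Union>W\<in>E. Pow W)"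
  proof (rule F_opI)
    have "W \<in> E"
      using F_op_subset W by (rule subsetD)
    with \<open>V \<subseteq> W\<close> show "V \<in> (\<Union>W\<in>E. Pow W)" by blast
  next
    fix \<sigma>
    assume "\<sigma> \<in> Euc"
    with W obtain W' where "W' \<in> E" and "match G R W \<sigma> W'"
      by (blast dest: F_op_uncontrollable)
    moreover from this(2) \<open>V \<subseteq> W\<close> have "match G R V \<sigma> W'"
      by (rule match_antimono)
    ultimately show "\<exists>W'\<in>\<Union>W\<in>E. Pow W. match G R V \<sigma> W'"
      using \<open>E \<subseteq> (\<Union>W\<in>E. Pow W)\<close> by blast
  next
    fix x z \<sigma> z'
    assume "(x, z) \<in> V" and "\<sigma> \<in> Er" and "(z, \<sigma>, z') \<in> trans R"
    with W \<open>V \<subseteq> W\<close> obtain x' W'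
      where "(x, \<sigma>, x') \<in> trans G" "W' \<in> E" "(x', z') \<in> W'" "match G R W \<sigma> W'"
      by (blast dest: F_op_required)
    moreover from this(4) \<open>V \<subseteq> W\<close> have "match G R V \<sigma> W'"
      by (rule match_antimono)
    ultimately show "\<exists>x' W'. (x, \<sigma>, x') \<in> trans G \<and> W' \<in> (\<Union>W\<in>E. Pow W) \<and> (x', z') \<in> W' \<and>
                 match G R V \<sigma> W'"
      using \<open>E \<subseteq> (\<Union>W\<in>E. Pow W)\<close> by blast
  qed
qed

lemma E_up_eq_Union_Pow: "E_up Euc Er G R = (\<Union>W\<in>E_up Euc Er G R. Pow W)"
proof
  have "(\<Union>W\<in>E_up Euc Er G R. Pow W) = (\<Union>W\<in>F_op Euc Er G R (E_up Euc Er G R). Pow W)"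
    by (simp only: E_up_fixpoint)
  also have "\<dots> \<subseteq> F_op Euc Er G R (\<Union>W\<in>E_up Euc Er G R. Pow W)"
    by (rule F_op_Pow_closure)
  finally show "(\<Union>W\<in>E_up Euc Er G R. Pow W) \<subseteq> E_up Euc Er G R"
    by (rule E_up_coinduct)
qed blast

definition sim_slice ::
    "('y, 'e) automaton \<Rightarrow> ('x, 'e) automaton \<Rightarrow> (('y \<times> 'x) \<times> 'z) set \<Rightarrow> 'y \<Rightarrow> ('x \<times> 'z) set" where
  "sim_slice S G \<Phi> y = {(x, z). reachable (sync S G) (y, x) \<and> ((y, x), z) \<in> \<Phi>}"

lemma match_sim_slice:
  assumes "cc_simulation Er (sync S G) R \<Phi>" and "(y, \<sigma>, y') \<in> trans S"
  shows "match G R (sim_slice S G \<Phi> y) \<sigma> (sim_slice S G \<Phi> y')"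
  unfolding match_def
proof (intro allI impI)
  fix x z x'
  assume "(x, z) \<in> sim_slice S G \<Phi> y" and x': "(x, \<sigma>, x') \<in> trans G"
  then have reach: "reachable (sync S G) (y, x)" and "((y, x), z) \<in> \<Phi>"
    unfolding sim_slice_def by auto
  moreover have step: "((y, x), \<sigma>, (y', x')) \<in> trans (sync S G)"
    using assms(2) x' by simp
  ultimately obtain z' where "(z, \<sigma>, z') \<in> trans R" "((y', x'), z') \<in> \<Phi>"
    using assms(1) unfolding cc_simulation_def by blast
  moreover have "reachable (sync S G) (y', x')"
    using reach step by (rule reachable.step_reach)
  ultimately show "\<exists>z'. (z, \<sigma>, z') \<in> trans R \<and> (x', z') \<in> sim_slice S G \<Phi> y'"
    unfolding sim_slice_def by blast
qed

lemma match_sim_slice_blocked: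
  assumes "admissible Euc S G" and "\<sigma> \<in> Euc" and "\<nexists>y'. (y, \<sigma>, y') \<in> trans S"
  shows "match G R (sim_slice S G \<Phi> y) \<sigma> W'"
  unfolding match_def
proof (intro allI impI)
  fix x z x'
  assume "(x, z) \<in> sim_slice S G \<Phi> y" and "(x, \<sigma>, x') \<in> trans G"
  moreover from this(1) have "reachable (sync S G) (y, x)"
    unfolding sim_slice_def by blast
  ultimately obtain p' where "((y, x), \<sigma>, p') \<in> trans (sync S G)"
    using assms(1,2) unfolding admissible_def by blast
  with assms(3) show "\<exists>z'. (z, \<sigma>, z') \<in> trans R \<and> (x', z') \<in> W'"
    by (metis prod.collapse sync_trans_iff)
qed

lemma sim_slices_post_fixpoint:
  assumes adm: "admissible Euc S G" and sim: "cc_simulation Er (sync S G) R \<Phi>"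
  shows "range (sim_slice S G \<Phi>) \<subseteq> F_op Euc Er G R (range (sim_slice S G \<Phi>))"
proof
  fix W
  assume "W \<in> range (sim_slice S G \<Phi>)"
  then obtain y where W: "W = sim_slice S G \<Phi> y" by blast
  show "W \<in> F_op Euc Er G R (range (sim_slice S G \<Phi>))"
  proof (rule F_opI)
    show "W \<in> range (sim_slice S G \<Phi>)" using W by blast
  next
    fix \<sigma>
    assume "\<sigma> \<in> Euc"
    show "\<exists>W'\<in>range (sim_slice S G \<Phi>). match G R W \<sigma> W'"
    proof (cases "\<exists>y'. (y, \<sigma>, y') \<in> trans S")
      case True
      then obtain y' where "(y, \<sigma>, y') \<in> trans S" by blast
      with sim have "match G R W \<sigma> (sim_slice S G \<Phi> y')"
        unfolding W by (rule match_sim_slice)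
      then show ?thesis by blast
    next
      case False
      with adm \<open>\<sigma> \<in> Euc\<close> have "match G R W \<sigma> W"
        unfolding W by (rule match_sim_slice_blocked)
      then show ?thesis using W by blast
    qed
  next
    fix x z \<sigma> z'
    assume xz: "(x, z) \<in> W" and "\<sigma> \<in> Er" and z': "(z, \<sigma>, z') \<in> trans R"
    have reach: "reachable (sync S G) (y, x)" and "((y, x), z) \<in> \<Phi>"
      using xz W unfolding sim_slice_def by auto
    then obtain q' where "((y, x), \<sigma>, q') \<in> trans (sync S G)" and "(q', z') \<in> \<Phi>"
      using sim \<open>\<sigma> \<in> Er\<close> z' unfolding cc_simulation_def by blast
    then obtain y' x' where step: "((y, x), \<sigma>, (y', x')) \<in> trans (sync S G)"
      and "((y', x'), z') \<in> \<Phi>"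
      by (cases q') blast
    moreover have "reachable (sync S G) (y', x')"
      using reach step by (rule reachable.step_reach)
    ultimately have "(x', z') \<in> sim_slice S G \<Phi> y'"
      unfolding sim_slice_def by blast
    moreover have "match G R W \<sigma> (sim_slice S G \<Phi> y')"
      using sim step unfolding W by (auto intro: match_sim_slice)
    ultimately show "\<exists>x' W'. (x, \<sigma>, x') \<in> trans G \<and> W' \<in> range (sim_slice S G \<Phi>) \<and>
                       (x', z') \<in> W' \<and> match G R W \<sigma> W'"
      using step by auto
  qed
qed

lemma SPR_imp_E_up_covers_init:
  assumes "S \<in> SPR Euc Er G R"
  shows "\<exists>W0\<in>E_up Euc Er G R. \<forall>x0\<in>init G. \<exists>z0\<in>init R. (x0, z0) \<in> W0"
proof -
  obtain y0 \<Phi> where y0: "y0 \<in> init S" and adm: "admissible Euc S G"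
    and sim: "cc_simulation Er (sync S G) R \<Phi>"
    using assms unfolding SPR_def cc_le_def by blast
  have "range (sim_slice S G \<Phi>) \<subseteq> E_up Euc Er G R"
    using sim_slices_post_fixpoint[OF adm sim] by (rule E_up_coinduct)
  then have "sim_slice S G \<Phi> y0 \<in> E_up Euc Er G R" by blast
  moreover have "\<exists>z0\<in>init R. (x0, z0) \<in> sim_slice S G \<Phi> y0" if "x0 \<in> init G" for x0
  proof -
    have "(y0, x0) \<in> init (sync S G)" using y0 that by simp
    then show ?thesis
      using sim unfolding cc_simulation_def sim_slice_def by (blast intro: reachable.init_reach)
  qed
  ultimately show ?thesis by blast
qed

definition match_supervisor ::
    "('x, 'e) automaton \<Rightarrow> ('z, 'e) automaton \<Rightarrow> ('x \<times> 'z) set set \<Rightarrow> ('x \<times> 'z) set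
     \<Rightarrow> (('x \<times> 'z) set, 'e) automaton" where
  "match_supervisor G R E W0 =
     \<lparr>trans = {(W, \<sigma>, W'). W \<in> E \<and> W' \<in> E \<and> match G R W \<sigma> W'}, init = {W0}\<rparr>"

lemma match_supervisor_trans_iff [simp]:
  "(W, \<sigma>, W') \<in> trans (match_supervisor G R E W0) \<longleftrightarrow> W \<in> E \<and> W' \<in> E \<and> match G R W \<sigma> W'"
  unfolding match_supervisor_def by simp

lemma init_match_supervisor [simp]: "init (match_supervisor G R E W0) = {W0}"
  unfolding match_supervisor_def by simp

lemma reachable_match_supervisor:
  assumes "W0 \<in> E" and "reachable (sync (match_supervisor G R E W0) G) (W, x)"
  shows "W \<in> E"
  using assms(2)
proof (induction "(W, x)" arbitrary: W x rule: reachable.induct)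
  case init_reach
  then show ?case using assms(1) by simp
next
  case (step_reach q \<sigma>)
  then show ?case by (cases q) simp
qed

lemma admissible_match_supervisor:
  assumes post: "E \<subseteq> F_op Euc Er G R E" and "W0 \<in> E"
  shows "admissible Euc (match_supervisor G R E W0) G"
  unfolding admissible_def
proof (intro allI impI ballI)
  fix W x \<sigma>
  assume reach: "reachable (sync (match_supervisor G R E W0) G) (W, x)" and "\<sigma> \<in> Euc"
    and "\<exists>x'. (x, \<sigma>, x') \<in> trans G"
  then obtain x' where "(x, \<sigma>, x') \<in> trans G" by blast
  have "W \<in> E"
    using \<open>W0 \<in> E\<close> reach by (rule reachable_match_supervisor)
  with post \<open>\<sigma> \<in> Euc\<close> obtain W' where "W' \<in> E" and "match G R W \<sigma> W'"
    by (blast dest: F_op_uncontrollable)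
  with \<open>W \<in> E\<close> \<open>(x, \<sigma>, x') \<in> trans G\<close>
  have "((W, x), \<sigma>, (W', x')) \<in> trans (sync (match_supervisor G R E W0) G)"
    by simp
  then show "\<exists>p'. ((W, x), \<sigma>, p') \<in> trans (sync (match_supervisor G R E W0) G)" by blast
qed

lemma cc_simulation_match_supervisor:
  assumes post: "E \<subseteq> F_op Euc Er G R E" and "W0 \<in> E"
    and cov: "\<forall>x0\<in>init G. \<exists>z0\<in>init R. (x0, z0) \<in> W0"
  shows "cc_simulation Er (sync (match_supervisor G R E W0) G) R {((W, x), z). W \<in> E \<and> (x, z) \<in> W}"
  unfolding cc_simulation_def
proof (intro conjI ballI allI impI)
  fix q0
  assume "q0 \<in> init (sync (match_supervisor G R E W0) G)"
  then obtain x0 where "q0 = (W0, x0)" and "x0 \<in> init G" by auto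
  then show "\<exists>z0\<in>init R. (q0, z0) \<in> {((W, x), z). W \<in> E \<and> (x, z) \<in> W}"
    using cov \<open>W0 \<in> E\<close> by auto
next
  fix q z \<sigma> q'
  assume "(q, z) \<in> {((W, x), z). W \<in> E \<and> (x, z) \<in> W}"
    and "(q, \<sigma>, q') \<in> trans (sync (match_supervisor G R E W0) G)"
  moreover obtain W x W' x' where "q = (W, x)" and "q' = (W', x')" by fastforce
  ultimately have "(x, z) \<in> W" "match G R W \<sigma> W'" "W' \<in> E" "(x, \<sigma>, x') \<in> trans G" by auto
  then show "\<exists>z'. (z, \<sigma>, z') \<in> trans R \<and> (q', z') \<in> {((W, x), z). W \<in> E \<and> (x, z) \<in> W}"
    unfolding match_def \<open>q' = (W', x')\<close> by blast
next
  fix q z \<sigma> z'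
  assume "(q, z) \<in> {((W, x), z). W \<in> E \<and> (x, z) \<in> W}" and "\<sigma> \<in> Er"
    and "(z, \<sigma>, z') \<in> trans R"
  moreover obtain W x where q: "q = (W, x)" by fastforce
  ultimately have "W \<in> E" "(x, z) \<in> W" by auto
  with post \<open>\<sigma> \<in> Er\<close> \<open>(z, \<sigma>, z') \<in> trans R\<close> obtain x' W'
    where "(x, \<sigma>, x') \<in> trans G" "W' \<in> E" "(x', z') \<in> W'" "match G R W \<sigma> W'"
    by (blast dest: F_op_required)
  with \<open>W \<in> E\<close> have "((W, x), \<sigma>, (W', x')) \<in> trans (sync (match_supervisor G R E W0) G)"
    and "((W', x'), z') \<in> {((W, x), z). W \<in> E \<and> (x, z) \<in> W}"
    by auto
  then show "\<exists>q'. (q, \<sigma>, q') \<in> trans (sync (match_supervisor G R E W0) G) \<and>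
                  (q', z') \<in> {((W, x), z). W \<in> E \<and> (x, z) \<in> W}"
    unfolding q by blast
qed

lemma match_supervisor_in_SPR:
  assumes "E \<subseteq> F_op Euc Er G R E" and "W0 \<in> E"
    and "\<forall>x0\<in>init G. \<exists>z0\<in>init R. (x0, z0) \<in> W0"
  shows "match_supervisor G R E W0 \<in> SPR Euc Er G R"
  using admissible_match_supervisor[OF assms(1,2)] cc_simulation_match_supervisor[OF assms]
  unfolding SPR_def cc_le_def by auto

theorem corollary2:
  fixes G :: "('x, 'e::finite) automaton" and R :: "('z, 'e) automaton"
    and Euc Er :: "'e set"
  assumes "init G \<noteq> {}" and "init R \<noteq> {}"
  shows "((\<exists>S :: ('y, 'e) automaton. S \<in> SPR Euc Er G R) \<longrightarrow>
            (\<exists>W0\<in>E_up Euc Er G R. \<forall>x0\<in>init G. \<exists>z0\<in>init R. (x0, z0) \<in> W0))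
       \<and> ((\<exists>W0\<in>E_up Euc Er G R. \<forall>x0\<in>init G. \<exists>z0\<in>init R. (x0, z0) \<in> W0) \<longrightarrow>
            (\<exists>S :: (('x \<times> 'z) set, 'e) automaton. S \<in> SPR Euc Er G R))
       \<and> ((\<exists>S :: ('y, 'e) automaton. S \<in> SPR Euc Er G R) \<longrightarrow>
            E_up Euc Er G R = (\<Union>W\<in>E_up Euc Er G R. Pow W))"
proof (intro conjI impI)
  assume "\<exists>S :: ('y, 'e) automaton. S \<in> SPR Euc Er G R"
  then show "\<exists>W0\<in>E_up Euc Er G R. \<forall>x0\<in>init G. \<exists>z0\<in>init R. (x0, z0) \<in> W0"
    using SPR_imp_E_up_covers_init by blast
next
  assume "\<exists>W0\<in>E_up Euc Er G R. \<forall>x0\<in>init G. \<exists>z0\<in>init R. (x0, z0) \<in> W0"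
  moreover have "E_up Euc Er G R \<subseteq> F_op Euc Er G R (E_up Euc Er G R)"
    by (simp only: E_up_fixpoint order_refl)
  ultimately show "\<exists>S :: (('x \<times> 'z) set, 'e) automaton. S \<in> SPR Euc Er G R"
    using match_supervisor_in_SPR by blast
next
  show "E_up Euc Er G R = (\<Union>W\<in>E_up Euc Er G R. Pow W)"
    by (rule E_up_eq_Union_Pow)
qed

end
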